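(* Let $G$ be a graph with no induced $P_7$, $C_4$, $C_6$ or $C_7$ and let $H=(B_1,\dots,B_5)$ be a nice blowup of $C_5$ in $G$. Then $G[A_3(i)]$ contains no induced path on four vertices, for each $i\in\{1,\dots,5\}$.
   Context: Indices modulo $5$. A nice blowup of $C_5$ is a tuple $(B_1,\dots,B_5)$ of pairwise disjoint cliques such that every vertex of $B_j$ has a neighbor in $B_{j-1}$ and in $B_{j+1}$, $B_j$ is anticomplete to $B_{j+2}$, and there are no $a\in B_j$, distinct $b,c\in B_{j+1}$, $d\in B_{j+2}$ with $G[\{a,b,c,d\}]\cong P_4$; $V(H)=\bigcup B_j$. For $v\notin V(H)$, $\operatorname{supp}(v)$ is the set of $j$ such that $v$ has a neighbor in $B_j$; $A_3(i)=\{v\notin V(H):\operatorname{supp}(v)=\{i-1,i,i+1\}\}$. *)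

theory Defs
  imports Main
begin

definition simple_graph :: "'a set \<Rightarrow> ('a \<Rightarrow> 'a \<Rightarrow> bool) \<Rightarrow> bool" where
  "simple_graph V E \<longleftrightarrow> finite V \<and> (\<forall>x y. E x y \<longrightarrow> E y x) \<and> (\<forall>x. \<not> E x x)"

definition has_induced_path :: "'a set \<Rightarrow> ('a \<Rightarrow> 'a \<Rightarrow> bool) \<Rightarrow> nat \<Rightarrow> bool" where
  "has_induced_path S E n \<longleftrightarrow> (\<exists>f. inj_on f {..<n} \<and> f ` {..<n} \<subseteq> S \<and>
     (\<forall>i<n. \<forall>j<n. E (f i) (f j) \<longleftrightarrow> (i = Suc j \<or> j = Suc i)))"

definition has_induced_cycle :: "'a set \<Rightarrow> ('a \<Rightarrow> 'a \<Rightarrow> bool) \<Rightarrow> nat \<Rightarrow> bool" where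
  "has_induced_cycle S E n \<longleftrightarrow> (\<exists>f. inj_on f {..<n} \<and> f ` {..<n} \<subseteq> S \<and>
     (\<forall>i<n. \<forall>j<n. E (f i) (f j) \<longleftrightarrow> (i = Suc j mod n \<or> j = Suc i mod n)))"

text \<open>Nice blowup of C5, blocks indexed by 0..4 (indices mod 5).\<close>
definition nice_blowup_C5 :: "'a set \<Rightarrow> ('a \<Rightarrow> 'a \<Rightarrow> bool) \<Rightarrow> (nat \<Rightarrow> 'a set) \<Rightarrow> bool" where
  "nice_blowup_C5 V E B \<longleftrightarrow>
     (\<forall>j<5. B j \<subseteq> V) \<and>
     (\<forall>j<5. \<forall>k<5. j \<noteq> k \<longrightarrow> B j \<inter> B k = {}) \<and>
     (\<forall>j<5. \<forall>x\<in>B j. \<forall>y\<in>B j. x \<noteq> y \<longrightarrow> E x y) \<and>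
     (\<forall>j<5. \<forall>x\<in>B j. (\<exists>y\<in>B ((j + 4) mod 5). E x y) \<and> (\<exists>y\<in>B ((j + 1) mod 5). E x y)) \<and>
     (\<forall>j<5. \<forall>x\<in>B j. \<forall>y\<in>B ((j + 2) mod 5). \<not> E x y) \<and>
     (\<forall>j<5. \<not> (\<exists>a\<in>B j. \<exists>b\<in>B ((j + 1) mod 5). \<exists>c\<in>B ((j + 1) mod 5). \<exists>d\<in>B ((j + 2) mod 5).
          b \<noteq> c \<and> has_induced_path {a, b, c, d} E 4))"

definition blowup_vertices :: "(nat \<Rightarrow> 'a set) \<Rightarrow> 'a set" where
  "blowup_vertices B = (\<Union>j<5. B j)"

definition supp :: "('a \<Rightarrow> 'a \<Rightarrow> bool) \<Rightarrow> (nat \<Rightarrow> 'a set) \<Rightarrow> 'a \<Rightarrow> nat set" where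
  "supp E B v = {j. j < 5 \<and> (\<exists>u\<in>B j. E v u)}"

definition A3 :: "'a set \<Rightarrow> ('a \<Rightarrow> 'a \<Rightarrow> bool) \<Rightarrow> (nat \<Rightarrow> 'a set) \<Rightarrow> nat \<Rightarrow> 'a set" where
  "A3 V E B i = {v \<in> V - blowup_vertices B. supp E B v = {(i + 4) mod 5, i, (i + 1) mod 5}}"

end

theory Submission
  imports Defs
begin

text \<open>
  Put \<open>X = B (i+1)\<close> and \<open>W = B (i-1)\<close>: two disjoint, mutually anticomplete cliques, and every
  vertex of \<open>A3 i\<close> lies outside them and has neighbours in both. Since \<open>G\<close> has no induced
  \<open>C4\<close>, adjacent such vertices have nested neighbourhoods in each clique, and two nonadjacent
  ones never have common neighbours in both cliques; since \<open>G\<close> has no induced \<open>C6\<close>, they have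
  one in at least one clique. Now let \<open>a-b-c-d\<close> be an induced path of such vertices, and say \<open>a\<close>
  and \<open>c\<close> share a neighbour in \<open>X\<close>. Then their neighbourhoods in \<open>W\<close> are disjoint, so by
  nesting \<open>b\<close> sees both of them, hence \<open>b\<close> and \<open>d\<close> share a neighbour in \<open>W\<close>; symmetrically the
  neighbourhood of \<open>c\<close> in \<open>X\<close> contains those of \<open>b\<close> and \<open>d\<close>. A common neighbour of \<open>a\<close> and
  \<open>d\<close> in either clique now closes an induced \<open>C4\<close> with \<open>b\<close> or \<open>c\<close>.
\<close>

definition neighbours_in :: "('a \<Rightarrow> 'a \<Rightarrow> bool) \<Rightarrow> 'a set \<Rightarrow> 'a \<Rightarrow> 'a set" where
  "neighbours_in E Y v = {y \<in> Y. E v y}"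

lemma has_induced_cycle_of_list:
  assumes "distinct vs" "set vs \<subseteq> S" "length vs = n"
    and "\<forall>i<n. \<forall>j<n. E (vs ! i) (vs ! j) \<longleftrightarrow> (i = Suc j mod n \<or> j = Suc i mod n)"
  shows "has_induced_cycle S E n"
  unfolding has_induced_cycle_def
proof (intro exI conjI)
  show "inj_on ((!) vs) {..<n}"
    using assms(1,3) by (auto simp: inj_on_def nth_eq_iff_index_eq)
  show "(!) vs ` {..<n} \<subseteq> S"
    using assms(2,3) by auto
qed (fact assms(4))

lemma all_less_4: "(\<forall>i<4. P i) \<longleftrightarrow> P 0 \<and> P 1 \<and> P 2 \<and> P (3::nat)"
  by (simp add: All_less_Suc eval_nat_numeral conj_ac)

lemma all_less_6: "(\<forall>i<6. P i) \<longleftrightarrow> P 0 \<and> P 1 \<and> P 2 \<and> P 3 \<and> P 4 \<and> P (5::nat)"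
  by (simp add: All_less_Suc eval_nat_numeral conj_ac)

locale C4_free_graph =
  fixes V :: "'a set" and E :: "'a \<Rightarrow> 'a \<Rightarrow> bool"
  assumes graph: "simple_graph V E"
    and no_C4: "\<not> has_induced_cycle V E 4"
begin

lemma adj_commute: "E x y \<longleftrightarrow> E y x"
  using graph unfolding simple_graph_def by blast

lemma adj_irrefl: "\<not> E x x"
  using graph by (simp add: simple_graph_def)

lemma C4_has_chord:
  assumes "v0 \<in> V" "v1 \<in> V" "v2 \<in> V" "v3 \<in> V" "v0 \<noteq> v2" "v1 \<noteq> v3"
    and "E v0 v1" "E v1 v2" "E v2 v3" "E v3 v0"
  shows "E v0 v2 \<or> E v1 v3"
proof (rule ccontr)
  assume chordless: "\<not> (E v0 v2 \<or> E v1 v3)"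
  with assms have "E v1 v0" "E v2 v1" "E v3 v2" "E v0 v3" "\<not> E v2 v0" "\<not> E v3 v1"
    by (simp_all add: adj_commute)
  with assms chordless have "has_induced_cycle V E 4"
    by (intro has_induced_cycle_of_list[of "[v0, v1, v2, v3]"])
       (auto simp: all_less_4 adj_irrefl)
  with no_C4 show False by simp
qed

lemma common_neighbours_adjacent:
  assumes "u \<in> V" "v \<in> V" "y \<in> V" "z \<in> V" "u \<noteq> v" "y \<noteq> z" "\<not> E u v"
    and "E u y" "E y v" "E v z" "E z u"
  shows "E y z"
  using C4_has_chord[OF assms(1,3,2,4,5,6,8-11)] assms(7) by blast

lemma neighbours_in_clique_nested:
  assumes "u \<in> V" "v \<in> V" "E u v" "u \<notin> Y" "v \<notin> Y" "Y \<subseteq> V"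
    and clique: "\<forall>y\<in>Y. \<forall>z\<in>Y. y \<noteq> z \<longrightarrow> E y z"
  shows "neighbours_in E Y u \<subseteq> neighbours_in E Y v \<or> neighbours_in E Y v \<subseteq> neighbours_in E Y u"
proof (rule ccontr)
  assume "\<not> ?thesis"
  then obtain y z where y: "y \<in> Y" "E u y" "\<not> E v y" and z: "z \<in> Y" "E v z" "\<not> E u z"
    by (auto simp: neighbours_in_def)
  have "E y z"
    using clique y z by metis
  moreover have "u \<noteq> z" "y \<noteq> v"
    using assms(4,5) y(1) z(1) by auto
  ultimately have "E u z \<or> E y v"
    using C4_has_chord[of u y z v] assms y z by (auto simp: adj_commute)
  with y z show False by (simp add: adj_commute)
qed

end

locale C4_C6_free_graph = C4_free_graph +
  assumes no_C6: "\<not> has_induced_cycle V E 6"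
begin

lemma C6_has_chord:
  assumes "v0 \<in> V" "v1 \<in> V" "v2 \<in> V" "v3 \<in> V" "v4 \<in> V" "v5 \<in> V"
    and "E v0 v1" "E v1 v2" "E v2 v3" "E v3 v4" "E v4 v5" "E v5 v0"
  shows "E v0 v2 \<or> E v0 v3 \<or> E v0 v4 \<or> E v1 v3 \<or> E v1 v4 \<or> E v1 v5 \<or>
         E v2 v4 \<or> E v2 v5 \<or> E v3 v5"
proof (rule ccontr)
  assume chordless: "\<not> ?thesis"
  with assms have "E v1 v0" "E v2 v1" "E v3 v2" "E v4 v3" "E v5 v4" "E v0 v5"
    "\<not> E v2 v0" "\<not> E v3 v0" "\<not> E v4 v0" "\<not> E v3 v1" "\<not> E v4 v1" "\<not> E v5 v1"
    "\<not> E v4 v2" "\<not> E v5 v2" "\<not> E v5 v3"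
    by (simp_all add: adj_commute)
  with assms chordless have "has_induced_cycle V E 6"
    by (intro has_induced_cycle_of_list[of "[v0, v1, v2, v3, v4, v5]"])
       (auto simp: all_less_6 adj_irrefl)
  with no_C6 show False by simp
qed

end

lemma has_induced_path_4E:
  assumes "has_induced_path S E 4"
  obtains a b c d where "a \<in> S" "b \<in> S" "c \<in> S" "d \<in> S" "a \<noteq> c" "a \<noteq> d" "b \<noteq> d"
    and "E a b" "E b c" "E c d" "\<not> E a c" "\<not> E a d" "\<not> E b d"
proof -
  obtain f where inj: "inj_on f {..<4}" and "f ` {..<4} \<subseteq> S"
    and adj: "\<forall>i<4. \<forall>j<4. E (f i) (f j) \<longleftrightarrow> (i = Suc j \<or> j = Suc i)"
    using assms unfolding has_induced_path_def by meson
  moreover have "f 0 \<noteq> f 2" "f 0 \<noteq> f 3" "f 1 \<noteq> f 3"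
    using inj_on_contraD[OF inj] by simp_all
  ultimately show thesis
    by (intro that[of "f 0" "f 1" "f 2" "f 3"]) auto
qed

lemma has_induced_path_mono:
  assumes "S \<subseteq> T" "has_induced_path S E n"
  shows "has_induced_path T E n"
  using assms unfolding has_induced_path_def by (meson order_trans)

locale anticomplete_cliques = C4_C6_free_graph +
  fixes X W :: "'a set"
  assumes X_subset: "X \<subseteq> V" and W_subset: "W \<subseteq> V" and disjoint: "X \<inter> W = {}"
    and clique_X: "\<forall>x\<in>X. \<forall>y\<in>X. x \<noteq> y \<longrightarrow> E x y"
    and clique_W: "\<forall>x\<in>W. \<forall>y\<in>W. x \<noteq> y \<longrightarrow> E x y"
    and anticomplete: "\<forall>x\<in>X. \<forall>w\<in>W. \<not> E x w"
begin

definition attached :: "'a \<Rightarrow> bool" where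
  "attached v \<longleftrightarrow> v \<in> V - (X \<union> W) \<and> neighbours_in E X v \<noteq> {} \<and> neighbours_in E W v \<noteq> {}"

lemma no_common_neighbours_in_both_cliques:
  assumes "u \<in> V" "v \<in> V" "u \<noteq> v" "\<not> E u v"
  shows "neighbours_in E X u \<inter> neighbours_in E X v = {} \<or>
         neighbours_in E W u \<inter> neighbours_in E W v = {}"
proof (rule ccontr)
  assume "\<not> ?thesis"
  then obtain x w where "x \<in> X" "w \<in> W" "E u x" "E v x" "E u w" "E v w"
    by (auto simp: neighbours_in_def)
  moreover have "x \<noteq> w"
    using disjoint \<open>x \<in> X\<close> \<open>w \<in> W\<close> by blast
  ultimately have "E x w"
    using common_neighbours_adjacent[of u v x w] assms X_subset W_subset adj_commute by blast
  with anticomplete \<open>x \<in> X\<close> \<open>w \<in> W\<close> show False by blast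
qed

lemma common_neighbour_in_some_clique:
  assumes "attached u" "attached v" "\<not> E u v"
  shows "neighbours_in E X u \<inter> neighbours_in E X v \<noteq> {} \<or>
         neighbours_in E W u \<inter> neighbours_in E W v \<noteq> {}"
proof (rule ccontr)
  assume none: "\<not> ?thesis"
  obtain xu xv wu wv where "xu \<in> X" "E u xu" "xv \<in> X" "E v xv" "wu \<in> W" "E u wu" "wv \<in> W" "E v wv"
    using assms(1,2) by (auto simp: attached_def neighbours_in_def)
  moreover from calculation none have "\<not> E u xv" "\<not> E v xu" "\<not> E u wv" "\<not> E v wu"
    by (auto simp: neighbours_in_def adj_commute)
  moreover from calculation have "E xu xv" "E wv wu"
    using clique_X clique_W by metis+
  moreover from calculation have "\<not> E xu wv" "\<not> E xu wu" "\<not> E xv wv" "\<not> E xv wu"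
    using anticomplete by blast+
  ultimately show False
    using C6_has_chord[of u xu xv v wv wu] assms X_subset W_subset
    by (auto simp: attached_def adj_commute)
qed

lemma attached_P4_ac_no_common_neighbour_in_X:
  assumes att: "attached a" "attached b" "attached c" "attached d" and "a \<noteq> c" "b \<noteq> d"
    and "E a b" "E b c" "E c d" "\<not> E a c" "\<not> E a d" "\<not> E b d"
  shows "neighbours_in E X a \<inter> neighbours_in E X c = {}"
proof (rule ccontr)
  assume X_ac: "neighbours_in E X a \<inter> neighbours_in E X c \<noteq> {}"
  have V: "a \<in> V" "b \<in> V" "c \<in> V" "d \<in> V" "a \<notin> X \<union> W" "b \<notin> X \<union> W" "c \<notin> X \<union> W" "d \<notin> X \<union> W"
    using att by (auto simp: attached_def)
  have nested: "neighbours_in E Y u \<subseteq> neighbours_in E Y v \<or> neighbours_in E Y v \<subseteq> neighbours_in E Y u"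
    if "Y = X \<or> Y = W" "(u, v) \<in> {(a, b), (b, c), (c, d)}" for Y u v
    using that neighbours_in_clique_nested[of u v Y] V X_subset W_subset clique_X clique_W assms
    by auto
  have W_ac: "neighbours_in E W a \<inter> neighbours_in E W c = {}"
    using no_common_neighbours_in_both_cliques[of a c] V X_ac assms by blast
  then have W_b: "neighbours_in E W a \<union> neighbours_in E W c \<subseteq> neighbours_in E W b"
    using nested[of W a b] nested[of W b c] att by (auto simp: attached_def)
  then have "neighbours_in E W b \<inter> neighbours_in E W d \<noteq> {}"
    using nested[of W c d] att by (auto simp: attached_def)
  then have X_bd: "neighbours_in E X b \<inter> neighbours_in E X d = {}"
    using no_common_neighbours_in_both_cliques[of b d] V assms by blast
  then have X_c: "neighbours_in E X d \<subseteq> neighbours_in E X c"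
    using nested[of X b c] nested[of X c d] att by (auto simp: attached_def)
  obtain y where y: "y \<in> X \<union> W" "E a y" "E d y"
    using common_neighbour_in_some_clique[of a d] att assms by (auto simp: neighbours_in_def)
  show False
  proof (cases "y \<in> X")
    case True
    with X_c y have "E c y"
      by (auto simp: neighbours_in_def)
    with y V X_subset W_subset assms have "E b y"
      using common_neighbours_adjacent[of a c b y] adj_commute by blast
    with X_bd True y show False
      by (auto simp: neighbours_in_def)
  next
    case False
    with W_b y have "E b y"
      by (auto simp: neighbours_in_def)
    with y V X_subset W_subset assms have "E c y"
      using common_neighbours_adjacent[of b d c y] adj_commute by blast
    with W_ac False y show False
      by (auto simp: neighbours_in_def)
  qed
qed

end

lemma anticomplete_cliques_swap:
  assumes "anticomplete_cliques V E X W"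
  shows "anticomplete_cliques V E W X"
proof -
  interpret anticomplete_cliques V E X W
    by (fact assms)
  show ?thesis
    using X_subset W_subset disjoint clique_X clique_W anticomplete adj_commute
    by unfold_locales blast+
qed

context anticomplete_cliques
begin

theorem no_induced_P4_among_attached: "\<not> has_induced_path (Collect attached) E 4"
proof
  assume "has_induced_path (Collect attached) E 4"
  then obtain a b c d where att: "attached a" "attached b" "attached c" "attached d"
    and path: "a \<noteq> c" "a \<noteq> d" "b \<noteq> d"
      "E a b" "E b c" "E c d" "\<not> E a c" "\<not> E a d" "\<not> E b d"
    by (rule has_induced_path_4E) auto
  interpret swapped: anticomplete_cliques V E W X
    using anticomplete_cliques_axioms by (rule anticomplete_cliques_swap)
  have "swapped.attached = attached"
    by (auto simp: fun_eq_iff swapped.attached_def attached_def)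
  with att have "neighbours_in E W a \<inter> neighbours_in E W c = {}"
    by (intro swapped.attached_P4_ac_no_common_neighbour_in_X[of a b c d]) (simp_all add: path)
  moreover have "neighbours_in E X a \<inter> neighbours_in E X c = {}"
    by (intro attached_P4_ac_no_common_neighbour_in_X[of a b c d]) (simp_all add: att path)
  ultimately show False
    using common_neighbour_in_some_clique[OF att(1,3) path(7)] by blast
qed

end

lemma nice_blowup_C5_anticomplete_cliques:
  assumes "C4_C6_free_graph V E" "nice_blowup_C5 V E B"
  shows "anticomplete_cliques V E (B ((i + 1) mod 5)) (B ((i + 4) mod 5))"
proof -
  interpret C4_C6_free_graph V E
    by (fact assms(1))
  define j k where "j = (i + 1) mod 5" and "k = (i + 4) mod 5"
  have jk: "j < 5" "k < 5" "j \<noteq> k" "(k + 2) mod 5 = j"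
    unfolding j_def k_def by presburger+
  have blowup: "\<forall>j<5. B j \<subseteq> V" "\<forall>j<5. \<forall>k<5. j \<noteq> k \<longrightarrow> B j \<inter> B k = {}"
    "\<forall>j<5. \<forall>x\<in>B j. \<forall>y\<in>B j. x \<noteq> y \<longrightarrow> E x y"
    "\<forall>j<5. \<forall>x\<in>B j. \<forall>y\<in>B ((j + 2) mod 5). \<not> E x y"
    using assms(2) unfolding nice_blowup_C5_def by simp_all
  have "\<forall>y\<in>B k. \<forall>x\<in>B j. \<not> E y x"
    using blowup(4) jk(2,4) by metis
  then have "\<forall>x\<in>B j. \<forall>y\<in>B k. \<not> E x y"
    using adj_commute by blast
  moreover have "B j \<subseteq> V" "B k \<subseteq> V" "B j \<inter> B k = {}"
    using blowup(1,2) jk(1-3) by simp_all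
  moreover have "\<forall>x\<in>B j. \<forall>y\<in>B j. x \<noteq> y \<longrightarrow> E x y" "\<forall>x\<in>B k. \<forall>y\<in>B k. x \<noteq> y \<longrightarrow> E x y"
    using blowup(3) jk(1,2) by simp_all
  ultimately show ?thesis
    unfolding j_def k_def by unfold_locales
qed

lemma A3_subset_attached:
  assumes "anticomplete_cliques V E (B ((i + 1) mod 5)) (B ((i + 4) mod 5))"
  shows "A3 V E B i \<subseteq> Collect (anticomplete_cliques.attached V E (B ((i + 1) mod 5)) (B ((i + 4) mod 5)))"
proof
  fix v
  assume "v \<in> A3 V E B i"
  then have v: "v \<in> V" "\<forall>j<5. v \<notin> B j" and supp: "supp E B v = {(i + 4) mod 5, i, (i + 1) mod 5}"
    by (simp_all add: A3_def blowup_vertices_def)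
  have "neighbours_in E (B j) v \<noteq> {}" if "j \<in> {(i + 1) mod 5, (i + 4) mod 5}" for j
  proof -
    from that supp have "j \<in> supp E B v"
      by blast
    then show ?thesis
      by (auto simp: supp_def neighbours_in_def)
  qed
  with v show "v \<in> Collect (anticomplete_cliques.attached V E (B ((i + 1) mod 5)) (B ((i + 4) mod 5)))"
    unfolding anticomplete_cliques.attached_def[OF assms] by simp
qed

theorem lemma8p5:
  fixes V :: "'a set" and E :: "'a \<Rightarrow> 'a \<Rightarrow> bool" and B :: "nat \<Rightarrow> 'a set"
  assumes "simple_graph V E"
    and "\<not> has_induced_path V E 7"
    and "\<not> has_induced_cycle V E 4"
    and "\<not> has_induced_cycle V E 6"
    and "\<not> has_induced_cycle V E 7"
    and "nice_blowup_C5 V E B"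
    and "i < 5"
  shows "\<not> has_induced_path (A3 V E B i) E 4"
proof -
  have "C4_C6_free_graph V E"
    using assms(1,3,4) by unfold_locales
  then interpret anticomplete_cliques V E "B ((i + 1) mod 5)" "B ((i + 4) mod 5)"
    using assms(6) by (rule nice_blowup_C5_anticomplete_cliques)
  show ?thesis
    using has_induced_path_mono[OF A3_subset_attached[OF anticomplete_cliques_axioms]]
      no_induced_P4_among_attached by metis
qed

end
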